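(* Every prime graph of order $n\le 50$ is odd prime.
   Context: All graphs are finite and simple. A graph $G$ of order $n$ is prime if there is a bijection $f:V(G)\to\{1,2,\ldots,n\}$ with $\gcd(f(u),f(v))=1$ for every edge $uv$. It is odd prime if there is a bijection $\ell:V(G)\to\{1,3,\ldots,2n-1\}$ with $\gcd(\ell(u),\ell(v))=1$ for every edge $uv$. *)

theory Defs
  imports Main
begin

definition simple_graph :: "'a set \<Rightarrow> 'a set set \<Rightarrow> bool" where
  "simple_graph V E \<longleftrightarrow> finite V \<and> (\<forall>e\<in>E. e \<subseteq> V \<and> card e = 2)"

definition prime_graph :: "'a set \<Rightarrow> 'a set set \<Rightarrow> bool" where
  "prime_graph V E \<longleftrightarrow> (\<exists>f :: 'a \<Rightarrow> nat. bij_betw f V {1..card V} \<and>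
      (\<forall>u v. {u, v} \<in> E \<longrightarrow> gcd (f u) (f v) = 1))"

definition odd_prime_graph :: "'a set \<Rightarrow> 'a set set \<Rightarrow> bool" where
  "odd_prime_graph V E \<longleftrightarrow> (\<exists>l :: 'a \<Rightarrow> nat. bij_betw l V {2 * i - 1 | i. i \<in> {1..card V}} \<and>
      (\<forall>u v. {u, v} \<in> E \<longrightarrow> gcd (l u) (l v) = 1))"

end

theory Submission
  imports Defs
begin

text \<open>If f is a prime labeling of G and g is a bijection from {1..n} onto the first n odd
  numbers that maps coprime pairs to coprime pairs, then g \<circ> f is an odd prime labeling.
  For every n \<le> 50 such a g is given explicitly by its list of values and checked by
  evaluation.\<close>

definition odd_coprime_relabeling :: "nat \<Rightarrow> (nat \<Rightarrow> nat) \<Rightarrow> bool" where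
  "odd_coprime_relabeling n g \<longleftrightarrow> bij_betw g {1..n} {2 * i - 1 | i. i \<in> {1..n}} \<and>
     (\<forall>a\<in>{1..n}. \<forall>b\<in>{1..n}. a \<noteq> b \<longrightarrow> coprime a b \<longrightarrow> coprime (g a) (g b))"

lemma odd_prime_graph_if_odd_coprime_relabeling:
  assumes "simple_graph V E" and "prime_graph V E"
    and "odd_coprime_relabeling (card V) g"
  shows "odd_prime_graph V E"
proof -
  obtain f :: "'a \<Rightarrow> nat" where f_bij: "bij_betw f V {1..card V}"
    and f_coprime: "\<And>u v. {u, v} \<in> E \<Longrightarrow> coprime (f u) (f v)"
    using assms(2) unfolding prime_graph_def coprime_iff_gcd_eq_1 by blast
  have g_bij: "bij_betw g {1..card V} {2 * i - 1 | i. i \<in> {1..card V}}"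
    and g_coprime: "\<And>a b. a \<in> {1..card V} \<Longrightarrow> b \<in> {1..card V} \<Longrightarrow> a \<noteq> b \<Longrightarrow>
      coprime a b \<Longrightarrow> coprime (g a) (g b)"
    using assms(3) unfolding odd_coprime_relabeling_def by blast+
  have "coprime ((g \<circ> f) u) ((g \<circ> f) v)" if "{u, v} \<in> E" for u v
  proof -
    have "u \<in> V" "v \<in> V" "u \<noteq> v"
      using assms(1) that unfolding simple_graph_def by (auto simp: card_2_iff)
    then have "f u \<noteq> f v"
      using f_bij by (auto simp: bij_betw_def inj_on_def)
    with \<open>u \<in> V\<close> \<open>v \<in> V\<close> show ?thesis
      using g_coprime f_coprime[OF that] bij_betwE[OF f_bij] by simp
  qed
  then show ?thesis
    unfolding odd_prime_graph_def coprime_iff_gcd_eq_1[symmetric]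
    using bij_betw_trans[OF f_bij g_bij] by blast
qed

lemma odd_numbers_below_eq: "{2 * i - 1 | i. i \<in> {1..n}} = {x :: nat. odd x \<and> x < 2 * n}"
proof (intro set_eqI iffI)
  fix x :: nat
  assume "x \<in> {x. odd x \<and> x < 2 * n}"
  then show "x \<in> {2 * i - 1 | i. i \<in> {1..n}}"
    by (intro CollectI exI[of _ "(x + 1) div 2"]) (auto elim: oddE)
qed auto

lemma card_odd_numbers_below: "card {x :: nat. odd x \<and> x < 2 * n} = n"
proof -
  have "{x :: nat. odd x \<and> x < 2 * n} = (\<lambda>i. 2 * i + 1) ` {..<n}"
    by (auto elim!: oddE)
  then show ?thesis
    by (simp add: card_image inj_on_def)
qed

text \<open>The list holds the values at 1, 2, ..., n; coprimality being symmetric, only pairs a < b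
  are checked.\<close>

definition odd_coprime_certificate :: "nat list \<Rightarrow> bool" where
  "odd_coprime_certificate xs \<longleftrightarrow> distinct xs \<and> list_all (\<lambda>x. odd x \<and> x < 2 * length xs) xs \<and>
     sorted_wrt (\<lambda>(a, x) (b, y). coprime a b \<longrightarrow> coprime x y) (enumerate 1 xs)"

lemma odd_coprime_relabeling_of_certificate:
  assumes "odd_coprime_certificate xs"
  shows "odd_coprime_relabeling (length xs) (\<lambda>a. xs ! (a - 1))"
proof -
  let ?n = "length xs"
  have dist: "distinct xs" and odd_below: "set xs \<subseteq> {x. odd x \<and> x < 2 * ?n}"
    and pairs: "sorted_wrt (\<lambda>(a, x) (b, y). coprime a b \<longrightarrow> coprime x y) (enumerate 1 xs)"
    using assms unfolding odd_coprime_certificate_def list_all_iff by auto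
  have "set xs = {x. odd x \<and> x < 2 * ?n}"
    using card_subset_eq[OF _ odd_below] distinct_card[OF dist] card_odd_numbers_below by simp
  then have "bij_betw (nth xs) {..<?n} {2 * i - 1 | i. i \<in> {1..?n}}"
    unfolding odd_numbers_below_eq by (intro bij_betw_nth dist) simp_all
  moreover have "bij_betw (\<lambda>a. a - 1) {1..?n} {..<?n}"
    by (rule bij_betw_byWitness[of _ Suc]) auto
  ultimately have bij: "bij_betw (\<lambda>a. xs ! (a - 1)) {1..?n} {2 * i - 1 | i. i \<in> {1..?n}}"
    using bij_betw_trans by (fastforce simp: comp_def)
  have ordered: "coprime (xs ! (a - 1)) (xs ! (b - 1))"
    if "a \<in> {1..?n}" "b \<in> {1..?n}" "a < b" "coprime a b" for a b
    using sorted_wrt_nth_less[OF pairs, of "a - 1" "b - 1"] that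
    by (simp add: nth_enumerate_eq)
  have "coprime (xs ! (a - 1)) (xs ! (b - 1))"
    if "a \<in> {1..?n}" "b \<in> {1..?n}" "a \<noteq> b" "coprime a b" for a b
  proof (cases "a < b")
    case True
    then show ?thesis using ordered that by blast
  next
    case False
    then have "b < a" using \<open>a \<noteq> b\<close> by simp
    then show ?thesis using ordered[of b a] that by (simp add: coprime_commute)
  qed
  with bij show ?thesis
    unfolding odd_coprime_relabeling_def by blast
qed

text \<open>Found by computer search; the entry at position n has length n.\<close>

definition odd_coprime_certificate_table :: "nat list list" where
  "odd_coprime_certificate_table =
    [[],
     [1],
     [1, 3],
     [1, 3, 5],
     [1, 7, 5, 3],
     [1, 9, 5, 3, 7],
     [1, 11, 5, 9, 7, 3],
     [1, 13, 5, 9, 7, 3, 11],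
     [1, 13, 5, 9, 7, 15, 11, 3],
     [1, 17, 11, 9, 7, 15, 13, 3, 5],
     [1, 15, 17, 9, 19, 7, 11, 5, 13, 3],
     [1, 13, 11, 9, 5, 21, 19, 3, 7, 15, 17],
     [1, 11, 7, 9, 23, 21, 19, 3, 5, 13, 17, 15],
     [1, 23, 25, 19, 7, 15, 11, 9, 5, 21, 13, 3, 17],
     [1, 27, 25, 23, 7, 15, 11, 19, 5, 21, 13, 9, 17, 3],
     [1, 29, 23, 27, 25, 21, 11, 19, 7, 15, 13, 9, 17, 3, 5],
     [1, 29, 25, 27, 7, 15, 11, 23, 17, 21, 13, 9, 31, 19, 5, 3],
     [1, 27, 25, 21, 11, 15, 31, 9, 17, 33, 29, 7, 23, 13, 5, 3, 19],
     [1, 31, 25, 29, 7, 23, 11, 27, 5, 21, 13, 15, 17, 33, 35, 9, 19, 3],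
     [1, 37, 25, 31, 7, 27, 11, 29, 5, 21, 13, 15, 17, 33, 35, 9, 19, 3, 23],
     [1, 39, 25, 33, 7, 19, 37, 27, 5, 21, 23, 15, 17, 13, 35, 11, 29, 9, 31, 3],
     [1, 39, 25, 31, 23, 33, 7, 29, 11, 27, 41, 15, 19, 21, 5, 13, 17, 9, 37, 3, 35],
     [1, 43, 29, 27, 37, 35, 11, 21, 25, 39, 31, 15, 17, 33, 23, 9, 19, 7, 41, 13, 5, 3],
     [1, 39, 25, 27, 7, 45, 41, 13, 11, 21, 29, 33, 43, 31, 35, 9, 37, 15, 19, 3, 5, 23, 17],
     [1, 39, 35, 27, 19, 45, 43, 23, 25, 33, 47, 21, 41, 37, 5, 13, 31, 15, 17, 11, 7, 9, 29, 3],
     [1, 43, 31, 33, 49, 45, 17, 27, 25, 19, 13, 15, 29, 23, 35, 11, 37, 9, 47, 21, 5, 39, 41, 3, 7],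
     [1, 47, 37, 43, 49, 27, 11, 41, 25, 3, 13, 45, 17, 33, 35, 31, 19, 15, 23, 21, 5, 39, 29, 9, 7, 51],
     [1, 39, 37, 33, 49, 45, 53, 27, 25, 7, 41, 9, 17, 19, 35, 13, 29, 15, 31, 21, 47, 11, 43, 3, 23, 51, 5],
     [1, 53, 25, 51, 49, 45, 11, 47, 23, 21, 13, 9, 43, 33, 35, 41, 19, 31, 37, 27, 55, 39, 29, 15, 7, 17, 5, 3],
     [1, 51, 43, 31, 49, 57, 23, 27, 25, 21, 13, 45, 29, 33, 35, 17, 47, 19, 53, 9, 55, 39, 37, 15, 7, 3, 5, 11, 41],
     [1, 57, 55, 41, 49, 39, 43, 37, 25, 21, 59, 45, 17, 29, 35, 27, 23, 15, 47, 9, 13, 19, 53, 33, 7, 51, 11, 3, 31, 5],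
     [1, 45, 49, 27, 29, 51, 53, 25, 37, 55, 41, 21, 19, 15, 11, 9, 43, 35, 47, 39, 17, 23, 61, 5, 13, 57, 7, 3, 31, 33, 59],
     [1, 57, 49, 53, 47, 21, 61, 51, 35, 17, 23, 63, 37, 33, 25, 27, 43, 15, 41, 39, 55, 19, 59, 45, 13, 9, 7, 11, 31, 5, 29, 3],
     [1, 59, 65, 57, 49, 45, 11, 53, 25, 63, 41, 15, 17, 33, 35, 47, 23, 9, 61, 21, 55, 27, 29, 39, 43, 51, 13, 19, 31, 7, 37, 3, 5],
     [1, 59, 67, 53, 49, 45, 11, 41, 25, 21, 13, 31, 17, 33, 35, 37, 19, 27, 61, 63, 55, 39, 29, 15, 7, 51, 5, 23, 47, 9, 43, 3, 65, 57],
     [1, 67, 65, 63, 43, 39, 59, 49, 47, 69, 37, 45, 29, 27, 55, 21, 17, 35, 31, 33, 25, 57, 41, 15, 23, 9, 13, 7, 53, 5, 61, 3, 19, 51, 11],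
     [1, 53, 37, 51, 49, 45, 67, 33, 31, 63, 43, 15, 23, 39, 35, 27, 19, 17, 59, 21, 65, 9, 71, 55, 7, 69, 25, 13, 47, 5, 29, 11, 41, 57, 61, 3],
     [1, 69, 47, 53, 37, 51, 49, 27, 25, 33, 13, 57, 73, 21, 55, 23, 43, 45, 41, 11, 35, 39, 71, 17, 31, 61, 19, 63, 29, 15, 59, 9, 65, 3, 7, 5, 67],
     [1, 63, 59, 57, 29, 45, 71, 53, 43, 33, 41, 15, 17, 9, 55, 49, 73, 75, 47, 27, 65, 69, 31, 7, 11, 51, 25, 39, 61, 35, 67, 21, 23, 19, 13, 5, 37, 3],
     [1, 75, 71, 45, 49, 69, 31, 27, 67, 35, 53, 9, 19, 55, 7, 25, 43, 39, 61, 63, 11, 51, 59, 65, 47, 57, 23, 33, 37, 21, 73, 15, 17, 29, 77, 5, 41, 3, 13],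
     [1, 75, 67, 71, 41, 65, 59, 47, 49, 55, 53, 35, 79, 45, 77, 27, 17, 63, 23, 33, 13, 57, 43, 39, 31, 5, 7, 25, 73, 21, 29, 15, 19, 51, 11, 9, 61, 69, 37, 3],
     [1, 81, 67, 63, 29, 75, 79, 49, 65, 77, 17, 39, 19, 69, 55, 41, 59, 35, 71, 33, 25, 51, 37, 45, 11, 57, 61, 21, 31, 15, 73, 27, 13, 53, 23, 7, 47, 9, 5, 3, 43],
     [1, 81, 65, 63, 71, 75, 79, 59, 41, 77, 67, 35, 53, 31, 55, 49, 19, 45, 37, 69, 5, 51, 43, 39, 23, 27, 25, 29, 73, 33, 47, 21, 17, 57, 11, 15, 61, 9, 13, 7, 83, 3],
     [1, 81, 67, 69, 31, 75, 71, 63, 29, 77, 13, 45, 79, 51, 55, 49, 73, 85, 41, 57, 25, 39, 37, 15, 19, 9, 5, 27, 43, 33, 53, 23, 65, 21, 11, 35, 47, 17, 59, 7, 83, 3, 61],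
     [1, 87, 55, 81, 49, 75, 71, 39, 25, 63, 53, 69, 17, 43, 77, 29, 79, 45, 83, 21, 11, 57, 61, 65, 41, 51, 23, 27, 73, 35, 67, 13, 5, 9, 7, 33, 37, 47, 85, 3, 59, 15, 31, 19],
     [1, 81, 85, 63, 89, 45, 73, 49, 79, 57, 13, 51, 41, 59, 55, 37, 29, 75, 71, 77, 25, 39, 61, 69, 31, 27, 23, 21, 67, 11, 53, 9, 65, 87, 19, 35, 47, 7, 17, 33, 83, 15, 43, 3, 5],
     [1, 81, 85, 73, 49, 75, 11, 57, 29, 63, 31, 65, 61, 33, 35, 41, 71, 87, 89, 91, 55, 39, 43, 69, 7, 59, 25, 27, 79, 51, 83, 19, 23, 13, 77, 45, 67, 9, 17, 21, 47, 15, 53, 3, 5, 37],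
     [1, 81, 65, 51, 83, 85, 79, 37, 55, 63, 89, 75, 19, 87, 91, 27, 31, 39, 61, 21, 5, 73, 23, 45, 49, 57, 25, 47, 53, 77, 43, 17, 13, 93, 29, 33, 59, 9, 11, 7, 41, 15, 67, 3, 35, 69, 71],
     [1, 87, 85, 83, 31, 51, 11, 81, 71, 93, 61, 35, 43, 77, 95, 63, 89, 75, 73, 91, 55, 49, 53, 69, 19, 29, 25, 33, 59, 39, 47, 27, 23, 21, 13, 45, 67, 9, 17, 57, 79, 15, 41, 7, 65, 3, 37, 5],
     [1, 81, 97, 79, 17, 35, 37, 63, 71, 77, 19, 75, 29, 91, 85, 49, 61, 15, 73, 51, 65, 57, 23, 45, 11, 87, 41, 93, 83, 55, 53, 27, 95, 21, 31, 9, 59, 43, 25, 33, 47, 39, 89, 7, 5, 69, 67, 3, 13],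
     [1, 99, 67, 81, 41, 87, 49, 79, 29, 39, 83, 15, 19, 21, 65, 69, 61, 85, 97, 53, 35, 33, 31, 75, 13, 57, 25, 77, 47, 55, 37, 51, 43, 27, 91, 45, 59, 23, 95, 17, 73, 63, 71, 11, 5, 93, 89, 9, 7, 3]]"

lemma odd_coprime_certificate_table_valid:
  "list_all odd_coprime_certificate odd_coprime_certificate_table"
  unfolding odd_coprime_certificate_table_def by code_simp

lemma length_odd_coprime_certificate_table: "map length odd_coprime_certificate_table = [0..<51]"
  unfolding odd_coprime_certificate_table_def by code_simp

lemma ex_odd_coprime_relabeling:
  assumes "n \<le> 50"
  shows "\<exists>g. odd_coprime_relabeling n g"
proof -
  let ?xs = "odd_coprime_certificate_table ! n"
  have n_less: "n < length odd_coprime_certificate_table"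
    using assms arg_cong[OF length_odd_coprime_certificate_table, of length] by simp
  then have "length ?xs = n"
    using nth_map[OF n_less, of length] assms
    by (simp add: length_odd_coprime_certificate_table)
  moreover have "odd_coprime_certificate ?xs"
    using n_less odd_coprime_certificate_table_valid by (simp add: list_all_length)
  ultimately show ?thesis
    using odd_coprime_relabeling_of_certificate by metis
qed

theorem theorem6p2:
  fixes V :: "'a set" and E :: "'a set set"
  assumes "simple_graph V E" and "card V \<le> 50" and "prime_graph V E"
  shows "odd_prime_graph V E"
  using ex_odd_coprime_relabeling[OF assms(2)] odd_prime_graph_if_odd_coprime_relabeling assms(1,3)
  by blast

end
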